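(* Let $(A,\circ)$ be a right normal band and $F$ a proper filter of $A$. Then $\epsilon_F$ is a congruence on $(A,\circ)$, and both $F$ and its complement $A\setminus F$ are unions of $\epsilon_F$-classes.
   Context: A right normal band is a semigroup $(A,\circ)$ with $x\circ x=x$ and $(x\circ y)\circ z=(y\circ x)\circ z$. Define $f\lesssim g$ iff $g\circ f=f$. A filter is a non-empty $F\subseteq A$ with $a\circ b\in F$ for all $a,b\in F$ and such that $a\in F$, $a\lesssim b$ imply $b\in F$; it is proper if $F\ne A$. For a filter $F$, $\epsilon_F=\{(a,b)\in A\times A: e\circ a=e\circ b$ for some $e\in F\}$. *)

theory Defs
  imports Main
begin

definition right_normal_band :: "'a set \<Rightarrow> ('a \<Rightarrow> 'a \<Rightarrow> 'a) \<Rightarrow> bool" where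
  "right_normal_band A op \<longleftrightarrow>
     (\<forall>x\<in>A. \<forall>y\<in>A. op x y \<in> A) \<and>
     (\<forall>x\<in>A. \<forall>y\<in>A. \<forall>z\<in>A. op (op x y) z = op x (op y z)) \<and>
     (\<forall>x\<in>A. op x x = x) \<and>
     (\<forall>x\<in>A. \<forall>y\<in>A. \<forall>z\<in>A. op (op x y) z = op (op y x) z)"

definition rnb_le :: "('a \<Rightarrow> 'a \<Rightarrow> 'a) \<Rightarrow> 'a \<Rightarrow> 'a \<Rightarrow> bool" where
  "rnb_le op f g \<longleftrightarrow> op g f = f"

definition is_filter :: "'a set \<Rightarrow> ('a \<Rightarrow> 'a \<Rightarrow> 'a) \<Rightarrow> 'a set \<Rightarrow> bool" where
  "is_filter A op F \<longleftrightarrow> F \<subseteq> A \<and> F \<noteq> {} \<and>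
     (\<forall>a\<in>F. \<forall>b\<in>F. op a b \<in> F) \<and>
     (\<forall>a\<in>F. \<forall>b\<in>A. rnb_le op a b \<longrightarrow> b \<in> F)"

definition proper_filter :: "'a set \<Rightarrow> ('a \<Rightarrow> 'a \<Rightarrow> 'a) \<Rightarrow> 'a set \<Rightarrow> bool" where
  "proper_filter A op F \<longleftrightarrow> is_filter A op F \<and> F \<noteq> A"

definition eps_rel :: "'a set \<Rightarrow> ('a \<Rightarrow> 'a \<Rightarrow> 'a) \<Rightarrow> 'a set \<Rightarrow> ('a \<times> 'a) set" where
  "eps_rel A op F = {(a, b). a \<in> A \<and> b \<in> A \<and> (\<exists>e\<in>F. op e a = op e b)}"

definition congruence_on :: "'a set \<Rightarrow> ('a \<Rightarrow> 'a \<Rightarrow> 'a) \<Rightarrow> ('a \<times> 'a) set \<Rightarrow> bool" where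
  "congruence_on A op R \<longleftrightarrow> equiv A R \<and>
     (\<forall>a\<in>A. \<forall>b\<in>A. \<forall>c\<in>A. \<forall>d\<in>A. (a, b) \<in> R \<longrightarrow> (c, d) \<in> R \<longrightarrow> (op a c, op b d) \<in> R)"

definition union_of_classes :: "'a set \<Rightarrow> ('a \<times> 'a) set \<Rightarrow> 'a set \<Rightarrow> bool" where
  "union_of_classes A R S \<longleftrightarrow> (\<exists>C \<subseteq> {R `` {x} | x. x \<in> A}. S = \<Union>C)"

end

theory Submission
  imports Defs
begin

text \<open>In a right normal band the left translations commute:
  \<open>x \<circ> (y \<circ> z) = y \<circ> (x \<circ> z)\<close>. Hence \<open>\<epsilon>\<^sub>F\<close> is transitive and compatible, because
  the two witnesses \<open>e, f \<in> F\<close> can be combined into the single witness \<open>e \<circ> f \<in> F\<close>.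
  A filter is \<open>\<epsilon>\<^sub>F\<close>-saturated since \<open>e \<circ> y \<lesssim> y\<close>, and its complement is saturated
  by symmetry of \<open>\<epsilon>\<^sub>F\<close>.\<close>

lemma union_of_classesI:
  assumes "equiv A R" and "S \<subseteq> A" and "R `` S \<subseteq> S"
  shows "union_of_classes A R S"
  unfolding union_of_classes_def
proof (intro exI conjI)
  show "{R `` {x} | x. x \<in> S} \<subseteq> {R `` {x} | x. x \<in> A}"
    using \<open>S \<subseteq> A\<close> by blast
  show "S = \<Union>{R `` {x} | x. x \<in> S}"
    using assms equiv_class_self[OF \<open>equiv A R\<close>] by blast
qed

lemma equiv_Image_Diff_subset:
  assumes "equiv A R" and "R `` S \<subseteq> S"
  shows "R `` (A - S) \<subseteq> A - S"
  using assms unfolding equiv_def sym_def by blast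

locale right_normal_band_on =
  fixes A :: "'a set" and op :: "'a \<Rightarrow> 'a \<Rightarrow> 'a"
  assumes right_normal_band: "right_normal_band A op"
begin

lemma closed: "x \<in> A \<Longrightarrow> y \<in> A \<Longrightarrow> op x y \<in> A"
  and assoc: "x \<in> A \<Longrightarrow> y \<in> A \<Longrightarrow> z \<in> A \<Longrightarrow> op (op x y) z = op x (op y z)"
  and idem: "x \<in> A \<Longrightarrow> op x x = x"
  and right_normal: "x \<in> A \<Longrightarrow> y \<in> A \<Longrightarrow> z \<in> A \<Longrightarrow> op (op x y) z = op (op y x) z"
  using right_normal_band unfolding right_normal_band_def by blast+

lemma left_commute:
  assumes "x \<in> A" "y \<in> A" "z \<in> A"
  shows "op x (op y z) = op y (op x z)"
  using assms by (metis assoc right_normal)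

lemma rnb_le_left_mult:
  assumes "e \<in> A" "y \<in> A"
  shows "rnb_le op (op e y) y"
  using assms by (simp add: rnb_le_def left_commute idem)

context
  fixes F :: "'a set"
  assumes filter: "is_filter A op F"
begin

lemma filter_subset: "F \<subseteq> A"
  and filter_nonempty: "F \<noteq> {}"
  and filter_mult: "e \<in> F \<Longrightarrow> f \<in> F \<Longrightarrow> op e f \<in> F"
  and filter_upward: "a \<in> F \<Longrightarrow> b \<in> A \<Longrightarrow> rnb_le op a b \<Longrightarrow> b \<in> F"
  using filter unfolding is_filter_def by blast+

lemma eps_relI: "a \<in> A \<Longrightarrow> b \<in> A \<Longrightarrow> e \<in> F \<Longrightarrow> op e a = op e b \<Longrightarrow> (a, b) \<in> eps_rel A op F"
  and eps_relE: "(a, b) \<in> eps_rel A op F \<Longrightarrow>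
    (\<And>e. a \<in> A \<Longrightarrow> b \<in> A \<Longrightarrow> e \<in> F \<Longrightarrow> op e a = op e b \<Longrightarrow> P) \<Longrightarrow> P"
  unfolding eps_rel_def by blast+

lemma equiv_eps_rel: "equiv A (eps_rel A op F)"
proof (rule equivI)
  show "eps_rel A op F \<subseteq> A \<times> A"
    unfolding eps_rel_def by blast
  show "refl_on A (eps_rel A op F)"
    using filter_nonempty unfolding refl_on_def eps_rel_def by blast
  show "sym (eps_rel A op F)"
    unfolding sym_def eps_rel_def by (auto intro: sym)
  show "trans (eps_rel A op F)"
  proof (rule transI)
    fix a b c
    assume "(a, b) \<in> eps_rel A op F" "(b, c) \<in> eps_rel A op F"
    then obtain e f where abc: "a \<in> A" "b \<in> A" "c \<in> A" and ef: "e \<in> F" "f \<in> F"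
      and ab: "op e a = op e b" and bc: "op f b = op f c"
      by (blast elim: eps_relE)
    have "e \<in> A" "f \<in> A" using ef filter_subset by auto
    then have "op (op e f) a = op f (op e a)" "op (op e f) b = op f (op e b)"
      and "op (op e f) b = op e (op f b)" "op (op e f) c = op e (op f c)"
      using abc by (simp_all add: assoc left_commute)
    then have "op (op e f) a = op (op e f) c"
      using ab bc by simp
    then show "(a, c) \<in> eps_rel A op F"
      using abc ef by (blast intro: eps_relI filter_mult)
  qed
qed

lemma eps_rel_mult:
  assumes "(a, b) \<in> eps_rel A op F" and "(c, d) \<in> eps_rel A op F"
  shows "(op a c, op b d) \<in> eps_rel A op F"
proof -
  obtain e f where abcd: "a \<in> A" "b \<in> A" "c \<in> A" "d \<in> A" and ef: "e \<in> F" "f \<in> F"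
    and ab: "op e a = op e b" and cd: "op f c = op f d"
    using assms by (blast elim: eps_relE)
  have efA: "e \<in> A" "f \<in> A" using ef filter_subset by auto
  have "op (op e f) (op a c) = op (op e a) (op f c)"
    using efA abcd by (simp add: assoc closed left_commute)
  also have "\<dots> = op (op e b) (op f d)"
    using ab cd by simp
  also have "\<dots> = op (op e f) (op b d)"
    using efA abcd by (simp add: assoc closed left_commute)
  finally show ?thesis
    using abcd ef by (blast intro: eps_relI closed filter_mult)
qed

lemma congruence_on_eps_rel: "congruence_on A op (eps_rel A op F)"
  unfolding congruence_on_def using equiv_eps_rel eps_rel_mult by blast

lemma eps_rel_Image_filter: "eps_rel A op F `` F \<subseteq> F"
proof
  fix y
  assume "y \<in> eps_rel A op F `` F"
  then obtain x e where "x \<in> F" "y \<in> A" "e \<in> F" "op e x = op e y"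
    by (blast elim: eps_relE)
  then have "op e y \<in> F"
    by (metis filter_mult)
  moreover have "rnb_le op (op e y) y"
    using \<open>e \<in> F\<close> \<open>y \<in> A\<close> filter_subset by (blast intro: rnb_le_left_mult)
  ultimately show "y \<in> F"
    using \<open>y \<in> A\<close> filter_upward by blast
qed

end

end

theorem proposition3p4:
  fixes A :: "'a set" and op :: "'a \<Rightarrow> 'a \<Rightarrow> 'a" and F :: "'a set"
  assumes "right_normal_band A op"
    and "proper_filter A op F"
  shows "congruence_on A op (eps_rel A op F)
    \<and> union_of_classes A (eps_rel A op F) F
    \<and> union_of_classes A (eps_rel A op F) (A - F)"
proof -
  interpret right_normal_band_on A op
    using assms(1) by unfold_locales
  have filter: "is_filter A op F"
    using assms(2) unfolding proper_filter_def by blast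
  note equiv = equiv_eps_rel[OF filter]
  note saturated = eps_rel_Image_filter[OF filter]
  show ?thesis
    using congruence_on_eps_rel[OF filter]
      union_of_classesI[OF equiv filter_subset[OF filter] saturated]
      union_of_classesI[OF equiv _ equiv_Image_Diff_subset[OF equiv saturated]]
    by blast
qed

end
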